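(* Within the class $\mathbf{DLat}$ of bounded distributive lattices: (i) for regular cardinals $\lambda\le\kappa$, $\kappa\mathbf{proH}\subseteq\lambda\mathbf{proH}$, and the inclusion is proper when $\lambda<\kappa$; (ii) $\mathbf{proH}=\bigcap_\kappa\kappa\mathbf{proH}$ (over all regular cardinals $\kappa$); (iii) for every regular cardinal $\kappa$, $\kappa\mathbf{proH}\subsetneq\kappa\mathbf{JD}$; in particular $\omega_0\mathbf{proH}\subsetneq\omega_0\mathbf{JD}=\mathbf{DLat}$.
   Context: For a meet-semilattice $A$: $\mathcal{DM} A$ is the complete lattice of normal ideals ($N=N^{u\ell}$); an existing join $\bigvee S$ is distributive if $a\wedge\bigvee S=\bigvee\{a\wedge s:s\in S\}$ for all $a$; a D-ideal is a downset containing $\bigvee S$ for each subset $S$ of it with distributive join; $\mathcal{BL} A$ is the frame of D-ideals, and $\mathcal{DM} A\subseteq\mathcal{BL} A$. A relative annihilator is $\langle a,b\rangle=\{x:a\wedge x\le b\}$; $A$ is proHeyting if every relative annihilator is a normal ideal. A $\kappa$-join is a join of fewer than $\kappa$ elements. $\mathcal{BL}_\kappa(\mathcal{DM} A)$ is the sub-$\kappa$-frame of $\mathcal{BL} A$ generated by $\mathcal{DM} A$ (closure under finite meets and $\kappa$-joins in $\mathcal{BL} A$). $A$ is $\kappa$-proHeyting if $\mathcal{BL}_\kappa(\mathcal{DM} A)=\mathcal{DM} A$. $\kappa\mathbf{proH}$ (resp. $\mathbf{proH}$) is the class of $\kappa$-proHeyting (resp. proHeyting) bounded distributive lattices; $\kappa\mathbf{JD}$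 is the class of bounded distributive lattices in which every existing $\kappa$-join is distributive; $\omega_0$ is the first infinite cardinal. *)

theory Defs
  imports Main
begin

definition is_lub :: "'a set \<Rightarrow> ('a \<Rightarrow> 'a \<Rightarrow> bool) \<Rightarrow> 'a set \<Rightarrow> 'a \<Rightarrow> bool" where
  "is_lub S le X j \<longleftrightarrow> j \<in> S \<and> (\<forall>x\<in>X. le x j) \<and> (\<forall>u\<in>S. (\<forall>x\<in>X. le x u) \<longrightarrow> le j u)"

definition is_glb :: "'a set \<Rightarrow> ('a \<Rightarrow> 'a \<Rightarrow> bool) \<Rightarrow> 'a set \<Rightarrow> 'a \<Rightarrow> bool" where
  "is_glb S le X m \<longleftrightarrow> m \<in> S \<and> (\<forall>x\<in>X. le m x) \<and> (\<forall>u\<in>S. (\<forall>x\<in>X. le u x) \<longrightarrow> le u m)"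

definition lmeet :: "'a set \<Rightarrow> ('a \<Rightarrow> 'a \<Rightarrow> bool) \<Rightarrow> 'a \<Rightarrow> 'a \<Rightarrow> 'a" where
  "lmeet S le a b = (THE m. is_glb S le {a, b} m)"

definition ljoin :: "'a set \<Rightarrow> ('a \<Rightarrow> 'a \<Rightarrow> bool) \<Rightarrow> 'a \<Rightarrow> 'a \<Rightarrow> 'a" where
  "ljoin S le a b = (THE j. is_lub S le {a, b} j)"

definition bdlat :: "'a set \<Rightarrow> ('a \<Rightarrow> 'a \<Rightarrow> bool) \<Rightarrow> bool" where
  "bdlat S le \<longleftrightarrow>
     (\<forall>x\<in>S. le x x) \<and>
     (\<forall>x\<in>S. \<forall>y\<in>S. le x y \<and> le y x \<longrightarrow> x = y) \<and>
     (\<forall>x\<in>S. \<forall>y\<in>S. \<forall>z\<in>S. le x y \<and> le y z \<longrightarrow> le x z) \<and>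
     (\<forall>a\<in>S. \<forall>b\<in>S. \<exists>j. is_lub S le {a, b} j) \<and>
     (\<forall>a\<in>S. \<forall>b\<in>S. \<exists>m. is_glb S le {a, b} m) \<and>
     (\<exists>t\<in>S. \<forall>x\<in>S. le x t) \<and>
     (\<exists>z\<in>S. \<forall>x\<in>S. le z x) \<and>
     (\<forall>a\<in>S. \<forall>b\<in>S. \<forall>c\<in>S.
        lmeet S le a (ljoin S le b c) = ljoin S le (lmeet S le a b) (lmeet S le a c))"

definition ubs :: "'a set \<Rightarrow> ('a \<Rightarrow> 'a \<Rightarrow> bool) \<Rightarrow> 'a set \<Rightarrow> 'a set" where
  "ubs S le X = {u \<in> S. \<forall>x\<in>X. le x u}"

definition lbs :: "'a set \<Rightarrow> ('a \<Rightarrow> 'a \<Rightarrow> bool) \<Rightarrow> 'a set \<Rightarrow> 'a set" where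
  "lbs S le X = {l \<in> S. \<forall>x\<in>X. le l x}"

definition normal_ideal :: "'a set \<Rightarrow> ('a \<Rightarrow> 'a \<Rightarrow> bool) \<Rightarrow> 'a set \<Rightarrow> bool" where
  "normal_ideal S le N \<longleftrightarrow> N \<subseteq> S \<and> N = lbs S le (ubs S le N)"

definition DM :: "'a set \<Rightarrow> ('a \<Rightarrow> 'a \<Rightarrow> bool) \<Rightarrow> 'a set set" where
  "DM S le = {N. normal_ideal S le N}"

definition dist_join :: "'a set \<Rightarrow> ('a \<Rightarrow> 'a \<Rightarrow> bool) \<Rightarrow> 'a set \<Rightarrow> 'a \<Rightarrow> bool" where
  "dist_join S le X j \<longleftrightarrow> X \<subseteq> S \<and> is_lub S le X j \<and>
     (\<forall>a\<in>S. is_lub S le ((\<lambda>s. lmeet S le a s) ` X) (lmeet S le a j))"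

definition D_ideal :: "'a set \<Rightarrow> ('a \<Rightarrow> 'a \<Rightarrow> bool) \<Rightarrow> 'a set \<Rightarrow> bool" where
  "D_ideal S le I \<longleftrightarrow> I \<subseteq> S \<and> (\<forall>x\<in>I. \<forall>y\<in>S. le y x \<longrightarrow> y \<in> I) \<and>
     (\<forall>X j. X \<subseteq> I \<and> dist_join S le X j \<longrightarrow> j \<in> I)"

definition BL :: "'a set \<Rightarrow> ('a \<Rightarrow> 'a \<Rightarrow> bool) \<Rightarrow> 'a set set" where
  "BL S le = {I. D_ideal S le I}"

definition BL_join :: "'a set \<Rightarrow> ('a \<Rightarrow> 'a \<Rightarrow> bool) \<Rightarrow> 'a set set \<Rightarrow> 'a set" where
  "BL_join S le F = \<Inter>{I \<in> BL S le. \<Union>F \<subseteq> I}"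

inductive_set BLk :: "'k rel \<Rightarrow> 'a set \<Rightarrow> ('a \<Rightarrow> 'a \<Rightarrow> bool) \<Rightarrow> 'a set set"
  for \<kappa> :: "'k rel" and S :: "'a set" and le :: "'a \<Rightarrow> 'a \<Rightarrow> bool" where
  base: "N \<in> DM S le \<Longrightarrow> N \<in> BLk \<kappa> S le"
| top: "S \<in> BLk \<kappa> S le"
| meet: "I \<in> BLk \<kappa> S le \<Longrightarrow> J \<in> BLk \<kappa> S le \<Longrightarrow> I \<inter> J \<in> BLk \<kappa> S le"
| join: "(\<And>I. I \<in> F \<Longrightarrow> I \<in> BLk \<kappa> S le) \<Longrightarrow> (card_of F, \<kappa>) \<in> ordLess \<Longrightarrow> BL_join S le F \<in> BLk \<kappa> S le"

definition kproH :: "'k rel \<Rightarrow> 'a set \<Rightarrow> ('a \<Rightarrow> 'a \<Rightarrow> bool) \<Rightarrow> bool" where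
  "kproH \<kappa> S le \<longleftrightarrow> BLk \<kappa> S le = DM S le"

definition rel_ann :: "'a set \<Rightarrow> ('a \<Rightarrow> 'a \<Rightarrow> bool) \<Rightarrow> 'a \<Rightarrow> 'a \<Rightarrow> 'a set" where
  "rel_ann S le a b = {x \<in> S. le (lmeet S le a x) b}"

definition proH :: "'a set \<Rightarrow> ('a \<Rightarrow> 'a \<Rightarrow> bool) \<Rightarrow> bool" where
  "proH S le \<longleftrightarrow> (\<forall>a\<in>S. \<forall>b\<in>S. normal_ideal S le (rel_ann S le a b))"

definition kJD :: "'k rel \<Rightarrow> 'a set \<Rightarrow> ('a \<Rightarrow> 'a \<Rightarrow> bool) \<Rightarrow> bool" where
  "kJD \<kappa> S le \<longleftrightarrow> (\<forall>X j. X \<subseteq> S \<and> (card_of X, \<kappa>) \<in> ordLess \<and> is_lub S le X j \<longrightarrow> dist_join S le X j)"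

definition regular_card :: "'k rel \<Rightarrow> bool" where
  "regular_card \<kappa> \<longleftrightarrow> Card_order \<kappa> \<and> \<not> finite (Field \<kappa>) \<and> regularCard \<kappa>"

end

theory Submission
  imports Defs
begin

(* A join j of X is distributive iff every relative annihilator containing X contains j.
   If A is kappa-proHeyting, the BL-join of fewer than kappa normal ideals is normal, hence
   contains every join of their union, and it lies inside each relative annihilator (a D-ideal)
   containing them; so kappa-joins are distributive.  Shrinking kappa only removes BL-joins, which
   gives the inclusions between the classes.  If A is proHeyting, every D-ideal N is normal:
   normality of the relative annihilators makes any z in the normal closure of N the distributive
   join of the meets of z with the elements of N.  Conversely, a relative annihilator is the
   BL-join of the principal ideals below its elements, a kappa-join once kappa exceeds the size
   of A.
   Both separating examples are lattices of sets.  The subsets of K u {q} meeting K in fewer than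
   lambda points, together with K u {q} itself, form a lambda-proHeyting lattice in which the join
   of the singletons of K, of size lambda < kappa, is not distributive.  In the lattice of sets
   that either avoid q and meet K0 in fewer than kappa points, or contain q and all but fewer than
   kappa points of K1, every kappa-join is a union; yet the BL-join of the normal ideal of subsets
   of K0 with the principal ideal of K1 lies in the annihilator of K1 u {q} relative to K1, while
   its normal closure contains the top. *)

unbundle cardinal_syntax

lemma regular_card_finite_ordLess:
  assumes "regular_card \<kappa>" and "finite A"
  shows "|A| <o \<kappa>"
proof -
  have "Well_order \<kappa>" and "\<not> finite (Field \<kappa>)"
    using assms(1) card_order_on_well_order_on unfolding regular_card_def by auto
  then show ?thesis
    using assms(2)
    by (intro finite_ordLess_infinite card_of_Well_order) (simp_all add: Field_card_of)
qed

lemma regular_card_Un_ordLess: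
  "regular_card \<kappa> \<Longrightarrow> |A| <o \<kappa> \<Longrightarrow> |B| <o \<kappa> \<Longrightarrow> |A \<union> B| <o \<kappa>"
  unfolding regular_card_def by (simp add: card_of_Un_ordLess_infinite_Field)

lemma regular_card_UN_ordLess:
  assumes "regular_card \<kappa>" and "|I| <o \<kappa>" and "\<And>i. i \<in> I \<Longrightarrow> |A i| <o \<kappa>"
  shows "|\<Union>i\<in>I. A i| <o \<kappa>"
  using assms unfolding regular_card_def
  by (intro regularCard_UNION_bound) (auto simp: cinfinite_def)

lemma card_of_subset_ordLess: "A \<subseteq> B \<Longrightarrow> |B| <o \<kappa> \<Longrightarrow> |A| <o \<kappa>"
  by (rule ordLeq_ordLess_trans[OF card_of_mono1])

lemma card_of_image_ordLess: "|A| <o \<kappa> \<Longrightarrow> |f ` A| <o \<kappa>"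
  by (rule ordLeq_ordLess_trans[OF card_of_image])

lemma card_of_inj_image_Field_not_ordLess:
  assumes "Card_order \<kappa>" and "inj_on f (Field \<kappa>)"
  shows "\<not> |f ` Field \<kappa>| <o \<kappa>"
proof -
  have "|Field \<kappa>| =o |f ` Field \<kappa>|"
    using assms(2) card_of_ordIso inj_on_imp_bij_betw by blast
  then have "|f ` Field \<kappa>| =o \<kappa>"
    using card_of_Field_ordIso[OF assms(1)] ordIso_symmetric ordIso_transitive by blast
  then show ?thesis using not_ordLess_ordIso by blast
qed

lemma regular_card_natLeq: "regular_card natLeq"
  unfolding regular_card_def using natLeq_Card_order regularCard_natLeq Field_natLeq by simp

lemma regular_card_cardSuc: "\<not> finite A \<Longrightarrow> regular_card (cardSuc (card_of A))"
  using card_of_Card_order[of A] unfolding regular_card_def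
  by (simp add: cardSuc_Card_order cardSuc_finite infinite_cardSuc_regularCard Field_card_of)

lemma lbs_ubs_extensive: "X \<subseteq> S \<Longrightarrow> X \<subseteq> lbs S le (ubs S le X)"
  unfolding lbs_def ubs_def by blast

lemma normal_idealI: "X \<subseteq> S \<Longrightarrow> lbs S le (ubs S le X) \<subseteq> X \<Longrightarrow> normal_ideal S le X"
  unfolding normal_ideal_def using lbs_ubs_extensive by blast

lemma normal_ideal_lbs_ubs_subset:
  "normal_ideal S le N \<Longrightarrow> X \<subseteq> N \<Longrightarrow> lbs S le (ubs S le X) \<subseteq> N"
  unfolding normal_ideal_def lbs_def ubs_def by blast

lemma normal_ideal_lub_mem:
  assumes "normal_ideal S le N" and "X \<subseteq> N" and "is_lub S le X j"
  shows "j \<in> N"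
proof -
  have "j \<in> lbs S le (ubs S le X)"
    using assms(3) unfolding is_lub_def lbs_def ubs_def by blast
  then show ?thesis using normal_ideal_lbs_ubs_subset[OF assms(1,2)] by blast
qed

lemma normal_ideal_Int:
  "normal_ideal S le M \<Longrightarrow> normal_ideal S le N \<Longrightarrow> normal_ideal S le (M \<inter> N)"
  by (intro normal_idealI)
    (use normal_ideal_lbs_ubs_subset[of S le M] normal_ideal_lbs_ubs_subset[of S le N] in
      \<open>auto simp: normal_ideal_def\<close>)

lemma normal_ideal_carrier: "normal_ideal S le S"
  by (rule normal_idealI) (auto simp: lbs_def)

lemma D_ideal_carrier: "D_ideal S le S"
  unfolding D_ideal_def dist_join_def is_lub_def by simp

lemma D_ideal_subset: "D_ideal S le I \<Longrightarrow> I \<subseteq> S"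
  unfolding D_ideal_def by blast

lemma D_ideal_down_closed: "D_ideal S le I \<Longrightarrow> x \<in> I \<Longrightarrow> y \<in> S \<Longrightarrow> le y x \<Longrightarrow> y \<in> I"
  unfolding D_ideal_def by blast

lemma D_ideal_dist_join_mem: "D_ideal S le I \<Longrightarrow> X \<subseteq> I \<Longrightarrow> dist_join S le X j \<Longrightarrow> j \<in> I"
  unfolding D_ideal_def by blast

lemma D_ideal_Inter:
  "\<I> \<noteq> {} \<Longrightarrow> (\<And>I. I \<in> \<I> \<Longrightarrow> D_ideal S le I) \<Longrightarrow> D_ideal S le (\<Inter>\<I>)"
  unfolding D_ideal_def by blast

lemma D_ideal_BL_join: "\<Union>F \<subseteq> S \<Longrightarrow> D_ideal S le (BL_join S le F)"
  unfolding BL_join_def BL_def by (rule D_ideal_Inter) (auto intro: D_ideal_carrier)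

lemma BL_join_upper: "\<Union>F \<subseteq> BL_join S le F"
  unfolding BL_join_def by blast

lemma BL_join_least: "D_ideal S le I \<Longrightarrow> \<Union>F \<subseteq> I \<Longrightarrow> BL_join S le F \<subseteq> I"
  unfolding BL_join_def BL_def by blast

lemma kproH_BL_join_normal:
  assumes "kproH \<kappa> S le" and "\<And>N. N \<in> F \<Longrightarrow> normal_ideal S le N" and "|F| <o \<kappa>"
  shows "normal_ideal S le (BL_join S le F)"
proof -
  have "BL_join S le F \<in> BLk \<kappa> S le"
    using assms(2,3) by (intro BLk.join BLk.base) (simp_all add: DM_def)
  then show ?thesis using assms(1) unfolding kproH_def DM_def by simp
qed

lemma kproH_if_BL_join_normal:
  assumes "\<And>F. (\<And>N. N \<in> F \<Longrightarrow> normal_ideal S le N) \<Longrightarrow> |F| <o \<kappa> \<Longrightarrow>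
    normal_ideal S le (BL_join S le F)"
  shows "kproH \<kappa> S le"
proof -
  have "normal_ideal S le I" if "I \<in> BLk \<kappa> S le" for I
    using that
  proof induction
    case (join F)
    then show ?case using assms by blast
  qed (simp_all add: DM_def normal_ideal_carrier normal_ideal_Int)
  then show ?thesis unfolding kproH_def DM_def using BLk.base[of _ S le \<kappa>] by (auto simp: DM_def)
qed

lemma kproH_antimono:
  assumes "\<mu> \<le>o \<kappa>" and "kproH \<kappa> S le"
  shows "kproH \<mu> S le"
proof (rule kproH_if_BL_join_normal)
  fix F assume "\<And>N. N \<in> F \<Longrightarrow> normal_ideal S le N" and "|F| <o \<mu>"
  then show "normal_ideal S le (BL_join S le F)"
    using assms kproH_BL_join_normal ordLess_ordLeq_trans by blast
qed

definition down :: "'a set \<Rightarrow> ('a \<Rightarrow> 'a \<Rightarrow> bool) \<Rightarrow> 'a \<Rightarrow> 'a set" where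
  "down S le c = {x \<in> S. le x c}"

locale bounded_distrib_lattice =
  fixes S :: "'a set" and le :: "'a \<Rightarrow> 'a \<Rightarrow> bool" (infix \<open>\<sqsubseteq>\<close> 50)
  assumes bdlat: "bdlat S le"
begin

abbreviation meet :: "'a \<Rightarrow> 'a \<Rightarrow> 'a" (infixl \<open>\<sqinter>\<close> 70) where
  "a \<sqinter> b \<equiv> lmeet S le a b"

abbreviation join :: "'a \<Rightarrow> 'a \<Rightarrow> 'a" (infixl \<open>\<squnion>\<close> 65) where
  "a \<squnion> b \<equiv> ljoin S le a b"

lemma carrier_refl: "x \<in> S \<Longrightarrow> x \<sqsubseteq> x"
  using bdlat unfolding bdlat_def by blast

lemma carrier_antisym: "x \<in> S \<Longrightarrow> y \<in> S \<Longrightarrow> x \<sqsubseteq> y \<Longrightarrow> y \<sqsubseteq> x \<Longrightarrow> x = y"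
  using bdlat unfolding bdlat_def by blast

lemma carrier_trans: "x \<in> S \<Longrightarrow> y \<in> S \<Longrightarrow> z \<in> S \<Longrightarrow> x \<sqsubseteq> y \<Longrightarrow> y \<sqsubseteq> z \<Longrightarrow> x \<sqsubseteq> z"
  using bdlat unfolding bdlat_def by blast

lemma distrib: "a \<in> S \<Longrightarrow> b \<in> S \<Longrightarrow> c \<in> S \<Longrightarrow> a \<sqinter> (b \<squnion> c) = a \<sqinter> b \<squnion> a \<sqinter> c"
  using bdlat unfolding bdlat_def by blast

lemma bot_exists: "\<exists>z\<in>S. \<forall>x\<in>S. z \<sqsubseteq> x"
  using bdlat unfolding bdlat_def by blast

lemma is_lub_unique: "is_lub S le X j \<Longrightarrow> is_lub S le X j' \<Longrightarrow> j = j'"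
  unfolding is_lub_def using carrier_antisym by blast

lemma is_glb_unique: "is_glb S le X m \<Longrightarrow> is_glb S le X m' \<Longrightarrow> m = m'"
  unfolding is_glb_def using carrier_antisym by blast

lemma meet_is_glb: assumes "a \<in> S" and "b \<in> S" shows "is_glb S le {a, b} (a \<sqinter> b)"
proof -
  obtain m where m: "is_glb S le {a, b} m" using bdlat assms unfolding bdlat_def by blast
  then show ?thesis unfolding lmeet_def by (rule theI) (use m is_glb_unique in blast)
qed

lemma join_is_lub: assumes "a \<in> S" and "b \<in> S" shows "is_lub S le {a, b} (a \<squnion> b)"
proof -
  obtain j where j: "is_lub S le {a, b} j" using bdlat assms unfolding bdlat_def by blast
  then show ?thesis unfolding ljoin_def by (rule theI) (use j is_lub_unique in blast)
qed

lemma meet_closed: "a \<in> S \<Longrightarrow> b \<in> S \<Longrightarrow> a \<sqinter> b \<in> S"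
  and meet_lower1: "a \<in> S \<Longrightarrow> b \<in> S \<Longrightarrow> a \<sqinter> b \<sqsubseteq> a"
  and meet_lower2: "a \<in> S \<Longrightarrow> b \<in> S \<Longrightarrow> a \<sqinter> b \<sqsubseteq> b"
  and meet_greatest: "a \<in> S \<Longrightarrow> b \<in> S \<Longrightarrow> c \<in> S \<Longrightarrow> c \<sqsubseteq> a \<Longrightarrow> c \<sqsubseteq> b \<Longrightarrow> c \<sqsubseteq> a \<sqinter> b"
  using meet_is_glb[of a b] unfolding is_glb_def by auto

lemma join_closed: "a \<in> S \<Longrightarrow> b \<in> S \<Longrightarrow> a \<squnion> b \<in> S"
  and join_upper1: "a \<in> S \<Longrightarrow> b \<in> S \<Longrightarrow> a \<sqsubseteq> a \<squnion> b"
  and join_upper2: "a \<in> S \<Longrightarrow> b \<in> S \<Longrightarrow> b \<sqsubseteq> a \<squnion> b"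
  and join_least: "a \<in> S \<Longrightarrow> b \<in> S \<Longrightarrow> c \<in> S \<Longrightarrow> a \<sqsubseteq> c \<Longrightarrow> b \<sqsubseteq> c \<Longrightarrow> a \<squnion> b \<sqsubseteq> c"
  using join_is_lub[of a b] unfolding is_lub_def by auto

lemma meet_leI1: "a \<in> S \<Longrightarrow> b \<in> S \<Longrightarrow> c \<in> S \<Longrightarrow> a \<sqsubseteq> c \<Longrightarrow> a \<sqinter> b \<sqsubseteq> c"
  using carrier_trans[OF meet_closed] meet_lower1 by blast

lemma meet_leI2: "a \<in> S \<Longrightarrow> b \<in> S \<Longrightarrow> c \<in> S \<Longrightarrow> b \<sqsubseteq> c \<Longrightarrow> a \<sqinter> b \<sqsubseteq> c"
  using carrier_trans[OF meet_closed] meet_lower2 by blast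

lemma meet_mono: "a \<in> S \<Longrightarrow> x \<in> S \<Longrightarrow> y \<in> S \<Longrightarrow> x \<sqsubseteq> y \<Longrightarrow> a \<sqinter> x \<sqsubseteq> a \<sqinter> y"
  by (intro meet_greatest meet_closed meet_lower1 meet_leI2)

lemma meet_absorb: "a \<in> S \<Longrightarrow> b \<in> S \<Longrightarrow> a \<sqsubseteq> b \<Longrightarrow> a \<sqinter> b = a"
  by (intro carrier_antisym meet_closed meet_lower1 meet_greatest carrier_refl)

lemma meet_assoc: "a \<in> S \<Longrightarrow> b \<in> S \<Longrightarrow> c \<in> S \<Longrightarrow> a \<sqinter> b \<sqinter> c = a \<sqinter> (b \<sqinter> c)"
  by (intro carrier_antisym meet_closed meet_greatest meet_leI1 meet_leI2 meet_lower1 meet_lower2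
      carrier_refl)

lemma is_lub_insert:
  assumes "X \<subseteq> S" and "is_lub S le X j" and "x \<in> S"
  shows "is_lub S le (insert x X) (x \<squnion> j)"
  unfolding is_lub_def
proof (intro conjI ballI impI)
  have j: "j \<in> S" "\<forall>y\<in>X. y \<sqsubseteq> j" using assms(2) unfolding is_lub_def by blast+
  then show "x \<squnion> j \<in> S" using assms(3) join_closed by blast
  fix y assume "y \<in> insert x X"
  then show "y \<sqsubseteq> x \<squnion> j"
  proof
    assume "y \<in> X"
    then show ?thesis
      using j assms carrier_trans[OF _ j(1) join_closed[OF assms(3) j(1)] _ join_upper2] by blast
  qed (simp add: join_upper1 assms(3) j(1))
next
  fix u assume "u \<in> S" and "\<forall>y\<in>insert x X. y \<sqsubseteq> u"
  then show "x \<squnion> j \<sqsubseteq> u"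
    using assms(2,3) unfolding is_lub_def by (intro join_least) auto
qed

lemma normal_ideal_down:
  assumes "c \<in> S"
  shows "normal_ideal S le (down S le c)"
proof (rule normal_idealI)
  have "c \<in> ubs S le (down S le c)" using assms unfolding ubs_def down_def by blast
  then show "lbs S le (ubs S le (down S le c)) \<subseteq> down S le c"
    unfolding lbs_def down_def by blast
qed (simp add: down_def)

lemma normal_ideal_down_closed:
  assumes "normal_ideal S le N" and "x \<in> N" and "y \<in> S" and "y \<sqsubseteq> x"
  shows "y \<in> N"
proof -
  have "x \<in> S" using assms(1,2) unfolding normal_ideal_def by blast
  then have "y \<in> lbs S le (ubs S le {x})"
    using assms(3,4) carrier_trans[OF assms(3) \<open>x \<in> S\<close>] unfolding lbs_def ubs_def by blast
  then show ?thesis using normal_ideal_lbs_ubs_subset[OF assms(1)] assms(2) by blast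
qed

lemma normal_ideal_imp_D_ideal:
  assumes "normal_ideal S le N"
  shows "D_ideal S le N"
  unfolding D_ideal_def
proof (intro conjI allI impI ballI)
  show "N \<subseteq> S" using assms unfolding normal_ideal_def by blast
next
  fix x y assume "x \<in> N" and "y \<in> S" and "y \<sqsubseteq> x"
  then show "y \<in> N" by (rule normal_ideal_down_closed[OF assms])
next
  fix X j assume "X \<subseteq> N \<and> dist_join S le X j"
  then show "j \<in> N" using normal_ideal_lub_mem[OF assms] unfolding dist_join_def by blast
qed

lemma rel_ann_D_ideal:
  assumes "a \<in> S" and "b \<in> S"
  shows "D_ideal S le (rel_ann S le a b)"
  unfolding D_ideal_def
proof (intro conjI allI impI ballI)
  fix x y assume x: "x \<in> rel_ann S le a b" and y: "y \<in> S" "y \<sqsubseteq> x"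
  then have "x \<in> S" and "a \<sqinter> x \<sqsubseteq> b" unfolding rel_ann_def by blast+
  moreover have "a \<sqinter> y \<sqsubseteq> a \<sqinter> x" using meet_mono[OF assms(1) y(1) \<open>x \<in> S\<close> y(2)] .
  ultimately have "a \<sqinter> y \<sqsubseteq> b"
    using carrier_trans[OF meet_closed[OF assms(1) y(1)] meet_closed[OF assms(1) \<open>x \<in> S\<close>] assms(2)]
    by blast
  then show "y \<in> rel_ann S le a b" unfolding rel_ann_def using y(1) by blast
next
  fix X j assume X: "X \<subseteq> rel_ann S le a b \<and> dist_join S le X j"
  then have lub: "is_lub S le ((\<lambda>x. a \<sqinter> x) ` X) (a \<sqinter> j)" and "j \<in> S"
    using assms(1) unfolding dist_join_def is_lub_def by blast+
  moreover have "\<forall>t\<in>(\<lambda>x. a \<sqinter> x) ` X. t \<sqsubseteq> b" using X unfolding rel_ann_def by blast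
  ultimately show "j \<in> rel_ann S le a b"
    using assms(2) unfolding is_lub_def rel_ann_def by blast
qed (simp add: rel_ann_def)

lemma BL_join_down_eq:
  assumes "D_ideal S le I"
  shows "BL_join S le (down S le ` I) = I"
proof (rule subset_antisym)
  have "down S le x \<subseteq> I" if "x \<in> I" for x
    using D_ideal_down_closed[OF assms that] unfolding down_def by blast
  then show "BL_join S le (down S le ` I) \<subseteq> I"
    by (intro BL_join_least[OF assms]) blast
  have "x \<in> down S le x" if "x \<in> I" for x
    using D_ideal_subset[OF assms] that carrier_refl unfolding down_def by blast
  then show "I \<subseteq> BL_join S le (down S le ` I)"
    using BL_join_upper[of "down S le ` I" S le] by blast
qed

lemma BL_join_eq_down:
  assumes "dist_join S le (\<Union>F) j"
  shows "BL_join S le F = down S le j"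
proof (rule subset_antisym)
  have "\<Union>F \<subseteq> S" and "j \<in> S" and "\<forall>x\<in>\<Union>F. x \<sqsubseteq> j"
    using assms unfolding dist_join_def is_lub_def by blast+
  then show "BL_join S le F \<subseteq> down S le j"
    using normal_ideal_imp_D_ideal[OF normal_ideal_down]
    by (intro BL_join_least) (auto simp: down_def)
  have D: "D_ideal S le (BL_join S le F)" using \<open>\<Union>F \<subseteq> S\<close> by (rule D_ideal_BL_join)
  have "j \<in> BL_join S le F" using D_ideal_dist_join_mem[OF D BL_join_upper assms] .
  then show "down S le j \<subseteq> BL_join S le F"
    unfolding down_def using D_ideal_down_closed[OF D] by blast
qed

lemma dist_join_iff_rel_ann:
  assumes "X \<subseteq> S" and "is_lub S le X j"
  shows "dist_join S le X j \<longleftrightarrow>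
    (\<forall>a\<in>S. \<forall>u\<in>S. X \<subseteq> rel_ann S le a u \<longrightarrow> j \<in> rel_ann S le a u)"
proof
  assume dist: "dist_join S le X j"
  show "\<forall>a\<in>S. \<forall>u\<in>S. X \<subseteq> rel_ann S le a u \<longrightarrow> j \<in> rel_ann S le a u"
  proof (intro ballI impI)
    fix a u assume "a \<in> S" and "u \<in> S" and X: "X \<subseteq> rel_ann S le a u"
    then have "is_lub S le ((\<lambda>x. a \<sqinter> x) ` X) (a \<sqinter> j)"
      using dist unfolding dist_join_def by blast
    moreover have "\<forall>t\<in>(\<lambda>x. a \<sqinter> x) ` X. t \<sqsubseteq> u" using X unfolding rel_ann_def by blast
    ultimately show "j \<in> rel_ann S le a u"
      using \<open>u \<in> S\<close> assms(2) unfolding is_lub_def rel_ann_def by blast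
  qed
next
  assume rel_ann_closed: "\<forall>a\<in>S. \<forall>u\<in>S. X \<subseteq> rel_ann S le a u \<longrightarrow> j \<in> rel_ann S le a u"
  have j: "j \<in> S" "\<forall>x\<in>X. x \<sqsubseteq> j" using assms(2) unfolding is_lub_def by blast+
  have "is_lub S le ((\<lambda>x. a \<sqinter> x) ` X) (a \<sqinter> j)" if a: "a \<in> S" for a
    unfolding is_lub_def
  proof (intro conjI ballI impI)
    show "a \<sqinter> j \<in> S" using a j(1) by (rule meet_closed)
    fix t assume "t \<in> (\<lambda>x. a \<sqinter> x) ` X"
    then show "t \<sqsubseteq> a \<sqinter> j" using a j assms(1) meet_mono by blast
  next
    fix u assume "u \<in> S" and "\<forall>t\<in>(\<lambda>x. a \<sqinter> x) ` X. t \<sqsubseteq> u"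
    then have "X \<subseteq> rel_ann S le a u" using assms(1) unfolding rel_ann_def by blast
    then show "a \<sqinter> j \<sqsubseteq> u" using rel_ann_closed a \<open>u \<in> S\<close> unfolding rel_ann_def by blast
  qed
  then show "dist_join S le X j" unfolding dist_join_def using assms by blast
qed

lemma is_lub_Union_down:
  assumes "X \<subseteq> S" and "is_lub S le X j"
  shows "is_lub S le (\<Union>(down S le ` X)) j"
  unfolding is_lub_def
proof (intro conjI ballI impI)
  have j: "j \<in> S" "\<forall>x\<in>X. x \<sqsubseteq> j" using assms(2) unfolding is_lub_def by blast+
  then show "j \<in> S" by blast
  fix y assume "y \<in> \<Union>(down S le ` X)"
  then obtain x where "x \<in> X" and "y \<in> S" and "y \<sqsubseteq> x" unfolding down_def by blast
  then show "y \<sqsubseteq> j" using j assms(1) carrier_trans[of y x j] by blast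
next
  fix u assume "u \<in> S" and u: "\<forall>y\<in>\<Union>(down S le ` X). y \<sqsubseteq> u"
  have "x \<in> down S le x" if "x \<in> X" for x
    using that assms(1) carrier_refl unfolding down_def by blast
  then have "\<forall>x\<in>X. x \<sqsubseteq> u" using u by blast
  then show "j \<sqsubseteq> u" using assms(2) \<open>u \<in> S\<close> unfolding is_lub_def by blast
qed

lemma proH_D_ideal_normal:
  assumes proH: "proH S le" and I: "D_ideal S le I"
  shows "normal_ideal S le I"
proof (rule normal_idealI)
  show "I \<subseteq> S" using I by (rule D_ideal_subset)
  show "lbs S le (ubs S le I) \<subseteq> I"
  proof
    fix z assume z: "z \<in> lbs S le (ubs S le I)"
    then have zS: "z \<in> S" unfolding lbs_def by blast
    \<comment> \<open>The relative annihilators containing \<open>I\<close> are normal, so they contain \<open>z\<close> as well.\<close>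
    have below: "c \<sqinter> z \<sqsubseteq> u" if "c \<in> S" "u \<in> S" "I \<subseteq> rel_ann S le c u" for c u
    proof -
      have "normal_ideal S le (rel_ann S le c u)" using proH that(1,2) unfolding proH_def by blast
      then show ?thesis
        using normal_ideal_lbs_ubs_subset that(3) z unfolding rel_ann_def by blast
    qed
    define X where "X = (\<lambda>x. z \<sqinter> x) ` I"
    have XI: "X \<subseteq> I"
      unfolding X_def using I D_ideal_down_closed[OF I] D_ideal_subset[OF I] meet_closed[OF zS]
        meet_lower2[OF zS] by blast
    have lub: "is_lub S le X z"
      unfolding is_lub_def
    proof (intro conjI ballI impI)
      show "z \<in> S" by (rule zS)
      fix t assume "t \<in> X"
      then show "t \<sqsubseteq> z" unfolding X_def using meet_lower1[OF zS] D_ideal_subset[OF I] by blast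
    next
      fix u assume "u \<in> S" and "\<forall>t\<in>X. t \<sqsubseteq> u"
      then have "I \<subseteq> rel_ann S le z u"
        unfolding X_def rel_ann_def using D_ideal_subset[OF I] by blast
      then show "z \<sqsubseteq> u" using below[OF zS \<open>u \<in> S\<close>] meet_absorb[OF zS zS carrier_refl[OF zS]] by simp
    qed
    have "X \<subseteq> S" using XI D_ideal_subset[OF I] by blast
    have "dist_join S le X z"
      unfolding dist_join_iff_rel_ann[OF \<open>X \<subseteq> S\<close> lub]
    proof (intro ballI impI)
      fix a u assume a: "a \<in> S" and u: "u \<in> S" and "X \<subseteq> rel_ann S le a u"
      then have "a \<sqinter> (z \<sqinter> x) \<sqsubseteq> u" if "x \<in> I" for x
        using that unfolding X_def rel_ann_def by blast
      then have "I \<subseteq> rel_ann S le (a \<sqinter> z) u"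
        unfolding rel_ann_def using D_ideal_subset[OF I] meet_assoc[OF a zS] by auto
      then have "a \<sqinter> z \<sqinter> z \<sqsubseteq> u" using below meet_closed[OF a zS] u by blast
      then show "z \<in> rel_ann S le a u"
        unfolding rel_ann_def using zS meet_absorb[OF meet_closed[OF a zS] zS meet_lower2[OF a zS]]
        by simp
    qed
    then show "z \<in> I" using D_ideal_dist_join_mem[OF I XI] by blast
  qed
qed

lemma proH_imp_kproH: "proH S le \<Longrightarrow> kproH \<kappa> S le"
proof (rule kproH_if_BL_join_normal)
  fix F assume "proH S le" and "\<And>N. N \<in> F \<Longrightarrow> normal_ideal S le N"
  moreover from this(2) have "\<Union>F \<subseteq> S" unfolding normal_ideal_def by blast
  ultimately show "normal_ideal S le (BL_join S le F)"
    by (intro proH_D_ideal_normal D_ideal_BL_join)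
qed

lemma kproH_D_ideal_normal:
  assumes "kproH \<kappa> S le" and "D_ideal S le I" and "|I| <o \<kappa>"
  shows "normal_ideal S le I"
proof -
  have "normal_ideal S le (BL_join S le (down S le ` I))"
    using assms(1) normal_ideal_down D_ideal_subset[OF assms(2)] card_of_image_ordLess[OF assms(3)]
    by (intro kproH_BL_join_normal) blast+
  then show ?thesis unfolding BL_join_down_eq[OF assms(2)] .
qed

lemma kproH_lub_mem_rel_ann:
  assumes "kproH \<kappa> S le" and "\<And>N. N \<in> F \<Longrightarrow> normal_ideal S le N" and "|F| <o \<kappa>"
    and "a \<in> S" and "b \<in> S" and "\<Union>F \<subseteq> rel_ann S le a b" and "is_lub S le (\<Union>F) j"
  shows "j \<in> rel_ann S le a b"
proof -
  have "j \<in> BL_join S le F"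
    using normal_ideal_lub_mem[OF kproH_BL_join_normal[OF assms(1-3)] BL_join_upper assms(7)] .
  moreover have "BL_join S le F \<subseteq> rel_ann S le a b"
    using BL_join_least[OF rel_ann_D_ideal[OF assms(4,5)] assms(6)] .
  ultimately show ?thesis by blast
qed

lemma kproH_imp_kJD:
  assumes kproH: "kproH \<kappa> S le"
  shows "kJD \<kappa> S le"
  unfolding kJD_def
proof (intro allI impI, elim conjE)
  fix X j assume X: "X \<subseteq> S" and small: "|X| <o \<kappa>" and lub: "is_lub S le X j"
  show "dist_join S le X j"
    unfolding dist_join_iff_rel_ann[OF X lub]
  proof (intro ballI impI)
    fix a u assume a: "a \<in> S" and u: "u \<in> S" and "X \<subseteq> rel_ann S le a u"
    then have "\<Union>(down S le ` X) \<subseteq> rel_ann S le a u"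
      using D_ideal_down_closed[OF rel_ann_D_ideal[OF a u]] unfolding down_def by blast
    then show "j \<in> rel_ann S le a u"
      using kproH X normal_ideal_down card_of_image_ordLess[OF small] a u
        is_lub_Union_down[OF X lub]
      by (intro kproH_lub_mem_rel_ann[where F = "down S le ` X"]) blast+
  qed
qed

lemma rel_ann_join_closed:
  assumes "a \<in> S" and "u \<in> S" and "x \<in> rel_ann S le a u" and "y \<in> rel_ann S le a u"
  shows "x \<squnion> y \<in> rel_ann S le a u"
proof -
  have x: "x \<in> S" "a \<sqinter> x \<sqsubseteq> u" and y: "y \<in> S" "a \<sqinter> y \<sqsubseteq> u"
    using assms(3,4) unfolding rel_ann_def by blast+
  have "a \<sqinter> (x \<squnion> y) = a \<sqinter> x \<squnion> a \<sqinter> y" using assms(1) x(1) y(1) by (rule distrib)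
  also have "\<dots> \<sqsubseteq> u" using meet_closed[OF assms(1)] x y assms(1,2) by (intro join_least) blast+
  finally show ?thesis unfolding rel_ann_def using x(1) y(1) join_closed by blast
qed

lemma finite_lub_mem:
  assumes "finite X" and "X \<subseteq> D" and "D_ideal S le D"
    and join_closed: "\<And>x y. x \<in> D \<Longrightarrow> y \<in> D \<Longrightarrow> x \<squnion> y \<in> D" and "D \<noteq> {}"
  shows "\<exists>j\<in>D. is_lub S le X j"
  using assms(1,2)
proof (induction X rule: finite_induct)
  case empty
  obtain z where z: "z \<in> S" "\<forall>x\<in>S. z \<sqsubseteq> x" using bot_exists by blast
  moreover obtain d where "d \<in> D" using assms(5) by blast
  ultimately have "z \<in> D"
    using D_ideal_down_closed[OF assms(3)] D_ideal_subset[OF assms(3)] by blast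
  then show ?case using z unfolding is_lub_def by blast
next
  case (insert x X)
  then obtain j where "j \<in> D" and "is_lub S le X j" by blast
  moreover have "X \<subseteq> S" and "x \<in> D" using insert.prems D_ideal_subset[OF assms(3)] by blast+
  ultimately show ?case
    using is_lub_insert join_closed D_ideal_subset[OF assms(3)] by blast
qed

lemma kJD_natLeq: "kJD natLeq S le"
  unfolding kJD_def
proof (intro allI impI, elim conjE)
  fix X j assume X: "X \<subseteq> S" and finite: "|X| <o natLeq" and lub: "is_lub S le X j"
  show "dist_join S le X j"
    unfolding dist_join_iff_rel_ann[OF X lub]
  proof (intro ballI impI)
    fix a u assume a: "a \<in> S" and u: "u \<in> S" and X_rel_ann: "X \<subseteq> rel_ann S le a u"
    have "finite X" using finite finite_iff_ordLess_natLeq by blast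
    moreover have "rel_ann S le a u \<noteq> {}" using u meet_lower2[OF a u] unfolding rel_ann_def by blast
    ultimately have "\<exists>j'\<in>rel_ann S le a u. is_lub S le X j'"
      using finite_lub_mem[OF _ X_rel_ann rel_ann_D_ideal[OF a u] rel_ann_join_closed[OF a u]]
      by blast
    then show "j \<in> rel_ann S le a u" using lub is_lub_unique by blast
  qed
qed

lemma finite_imp_proH:
  assumes "finite S"
  shows "proH S le"
  unfolding proH_def
proof (intro ballI)
  fix a b assume a: "a \<in> S" and b: "b \<in> S"
  define R where "R = rel_ann S le a b"
  have R: "D_ideal S le R" unfolding R_def using a b by (rule rel_ann_D_ideal)
  have "finite R" using assms D_ideal_subset[OF R] by (rule finite_subset[rotated])
  moreover have "R \<noteq> {}" using b meet_lower2[OF a b] unfolding R_def rel_ann_def by blast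
  ultimately obtain c where "c \<in> R" and c: "is_lub S le R c"
    using finite_lub_mem[OF _ subset_refl R rel_ann_join_closed[OF a b, folded R_def]] by blast
  have "R = down S le c"
  proof
    show "R \<subseteq> down S le c" using c D_ideal_subset[OF R] unfolding is_lub_def down_def by blast
    show "down S le c \<subseteq> R" using D_ideal_down_closed[OF R \<open>c \<in> R\<close>] unfolding down_def by blast
  qed
  moreover have "c \<in> S" using c unfolding is_lub_def by blast
  ultimately show "normal_ideal S le (rel_ann S le a b)"
    unfolding R_def by (simp add: normal_ideal_down)
qed

lemma proH_if_all_kproH:
  assumes "\<And>\<mu> :: 'a set set rel. regular_card \<mu> \<Longrightarrow> kproH \<mu> S le"
  shows "proH S le"
proof (cases "finite (UNIV :: 'a set)")
  case True
  then show ?thesis by (rule finite_imp_proH[OF finite_subset[OF subset_UNIV]])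
next
  case False
  define \<mu> where "\<mu> = cardSuc (card_of (UNIV :: 'a set set))"
  have "\<not> finite (UNIV :: 'a set set)" using False Finite_Set.finite_set by blast
  then have kproH: "kproH \<mu> S le" unfolding \<mu>_def by (intro assms regular_card_cardSuc)
  have small: "|A| <o \<mu>" for A :: "'a set"
  proof -
    have "|A| \<le>o card_of (UNIV :: 'a set)" by (rule card_of_mono1) simp
    moreover have "card_of (UNIV :: 'a set) <o card_of (UNIV :: 'a set set)"
      using card_of_Pow[of "UNIV :: 'a set"] by simp
    moreover have "card_of (UNIV :: 'a set set) <o \<mu>"
      unfolding \<mu>_def by (rule cardSuc_greater[OF card_of_Card_order])
    ultimately show ?thesis using ordLeq_ordLess_trans ordLess_transitive by blast
  qed
  show ?thesis
    unfolding proH_def using kproH_D_ideal_normal[OF kproH rel_ann_D_ideal small] by blast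
qed

end

locale set_lattice =
  fixes S :: "'a set set" and P :: "'a set"
  assumes subset_top: "X \<in> S \<Longrightarrow> X \<subseteq> P"
    and top_mem: "P \<in> S" and empty_mem: "{} \<in> S"
    and Un_mem: "X \<in> S \<Longrightarrow> Y \<in> S \<Longrightarrow> X \<union> Y \<in> S"
    and Int_mem: "X \<in> S \<Longrightarrow> Y \<in> S \<Longrightarrow> X \<inter> Y \<in> S"
begin

lemma lmeet_eq: "X \<in> S \<Longrightarrow> Y \<in> S \<Longrightarrow> lmeet S (\<subseteq>) X Y = X \<inter> Y"
  unfolding lmeet_def by (rule the_equality) (auto simp: is_glb_def Int_mem)

lemma ljoin_eq: "X \<in> S \<Longrightarrow> Y \<in> S \<Longrightarrow> ljoin S (\<subseteq>) X Y = X \<union> Y"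
  unfolding ljoin_def by (rule the_equality) (auto simp: is_lub_def Un_mem)

lemma bdlat_subset: "bdlat S (\<subseteq>)"
  unfolding bdlat_def
proof (intro conjI ballI)
  fix X Y assume "X \<in> S" and "Y \<in> S"
  then show "\<exists>j. is_lub S (\<subseteq>) {X, Y} j"
    by (auto simp: is_lub_def intro!: exI[of _ "X \<union> Y"] Un_mem)
  from \<open>X \<in> S\<close> \<open>Y \<in> S\<close> show "\<exists>m. is_glb S (\<subseteq>) {X, Y} m"
    by (auto simp: is_glb_def intro!: exI[of _ "X \<inter> Y"] Int_mem)
  fix Z assume "Z \<in> S"
  with \<open>X \<in> S\<close> \<open>Y \<in> S\<close> show "lmeet S (\<subseteq>) X (ljoin S (\<subseteq>) Y Z) =
      ljoin S (\<subseteq>) (lmeet S (\<subseteq>) X Y) (lmeet S (\<subseteq>) X Z)"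
    by (simp add: lmeet_eq ljoin_eq Un_mem Int_mem Int_Un_distrib)
qed (use top_mem empty_mem subset_top in auto)

sublocale bounded_distrib_lattice S "(\<subseteq>)"
  by unfold_locales (rule bdlat_subset)

lemma rel_ann_eq: "A \<in> S \<Longrightarrow> rel_ann S (\<subseteq>) A U = {X \<in> S. A \<inter> X \<subseteq> U}"
  unfolding rel_ann_def by (auto simp: lmeet_eq)

lemma is_lub_Union: "\<X> \<subseteq> S \<Longrightarrow> \<Union>\<X> \<in> S \<Longrightarrow> is_lub S (\<subseteq>) \<X> (\<Union>\<X>)"
  unfolding is_lub_def by blast

lemma dist_join_Union:
  assumes "\<X> \<subseteq> S" and "\<Union>\<X> \<in> S"
  shows "dist_join S (\<subseteq>) \<X> (\<Union>\<X>)"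
  unfolding dist_join_iff_rel_ann[OF assms(1) is_lub_Union[OF assms]]
  using assms(2) by (auto simp: rel_ann_eq)

end

definition small_sets_with_top :: "'l rel \<Rightarrow> 'p set \<Rightarrow> 'p \<Rightarrow> 'p set set" where
  "small_sets_with_top \<mu> K q = insert (insert q K) {X. X \<subseteq> insert q K \<and> |X \<inter> K| <o \<mu>}"

locale small_sets_with_top_lattice =
  fixes \<mu> :: "'l rel" and K :: "'p set" and q :: 'p
  assumes regular: "regular_card \<mu>" and q_notin: "q \<notin> K" and large: "\<not> |K| <o \<mu>"
begin

abbreviation B :: "'p set set" where
  "B \<equiv> small_sets_with_top \<mu> K q"

lemma mem_iff: "X \<in> B \<longleftrightarrow> X = insert q K \<or> X \<subseteq> insert q K \<and> |X \<inter> K| <o \<mu>"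
  unfolding small_sets_with_top_def by blast

lemma small_mem: "X \<subseteq> insert q K \<Longrightarrow> |X \<inter> K| <o \<mu> \<Longrightarrow> X \<in> B"
  unfolding mem_iff by blast

lemma large_mem_eq_top: "X \<in> B \<Longrightarrow> Y \<subseteq> X \<inter> K \<Longrightarrow> \<not> |Y| <o \<mu> \<Longrightarrow> X = insert q K"
  unfolding mem_iff using card_of_subset_ordLess[of Y "X \<inter> K"] by blast

sublocale set_lattice B "insert q K"
proof
  fix X Y assume X: "X \<in> B" and Y: "Y \<in> B"
  show "X \<union> Y \<in> B"
  proof (cases "X = insert q K \<or> Y = insert q K")
    case True
    then show ?thesis using X Y by (auto simp: mem_iff)
  next
    case False
    then have "|X \<inter> K \<union> Y \<inter> K| <o \<mu>"
      using X Y regular by (intro regular_card_Un_ordLess) (auto simp: mem_iff)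
    then show ?thesis using X Y by (intro small_mem) (auto simp: mem_iff Int_Un_distrib2)
  qed
  show "X \<inter> Y \<in> B"
  proof (cases "X = insert q K")
    case True
    then show ?thesis using Y by (auto simp: mem_iff Int_absorb1)
  next
    case False
    then show ?thesis
      using X card_of_subset_ordLess[of "X \<inter> Y \<inter> K" "X \<inter> K"]
      by (intro small_mem) (auto simp: mem_iff)
  qed
qed (auto simp: mem_iff regular_card_finite_ordLess[OF regular])

lemma kproH: "kproH \<mu> B (\<subseteq>)"
proof (rule kproH_if_BL_join_normal)
  fix F assume normal: "\<And>N. N \<in> F \<Longrightarrow> normal_ideal B (\<subseteq>) N" and small: "|F| <o \<mu>"
  then have F: "\<Union>F \<subseteq> B" unfolding normal_ideal_def by blast
  show "normal_ideal B (\<subseteq>) (BL_join B (\<subseteq>) F)"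
  proof (cases "\<forall>N\<in>F. |\<Union>N \<inter> K| <o \<mu>")
    case True
    then have "|\<Union>N\<in>F. \<Union>N \<inter> K| <o \<mu>" by (intro regular_card_UN_ordLess[OF regular small]) blast
    moreover have "(\<Union>N\<in>F. \<Union>N \<inter> K) = \<Union>(\<Union>F) \<inter> K" by blast
    ultimately have "\<Union>(\<Union>F) \<in> B" using F subset_top by (intro small_mem) auto
    then have "BL_join B (\<subseteq>) F = down B (\<subseteq>) (\<Union>(\<Union>F))"
      using F by (intro BL_join_eq_down dist_join_Union)
    then show ?thesis using normal_ideal_down \<open>\<Union>(\<Union>F) \<in> B\<close> by simp
  next
    case False
    then obtain N where "N \<in> F" and N_large: "\<not> |\<Union>N \<inter> K| <o \<mu>" by blast
    \<comment> \<open>The only upper bound of \<open>N\<close> is the top, so the normal ideal \<open>N\<close> is everything.\<close>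
    have "ubs B (\<subseteq>) N \<subseteq> {insert q K}"
      using large_mem_eq_top[OF _ _ N_large] unfolding ubs_def by blast
    then have "B \<subseteq> lbs B (\<subseteq>) (ubs B (\<subseteq>) N)" unfolding lbs_def using subset_top by blast
    then have "B \<subseteq> N" using normal[OF \<open>N \<in> F\<close>] unfolding normal_ideal_def by blast
    then have "BL_join B (\<subseteq>) F = B"
      using \<open>N \<in> F\<close> BL_join_upper[of F B] D_ideal_subset[OF D_ideal_BL_join[OF F]] by blast
    then show ?thesis using normal_ideal_carrier by simp
  qed
qed

lemma not_kJD:
  assumes "|K| <o \<kappa>"
  shows "\<not> kJD \<kappa> B (\<subseteq>)"
proof
  assume kJD: "kJD \<kappa> B (\<subseteq>)"
  define X where "X = (\<lambda>k. {k}) ` K"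
  have singleton_mem: "{x} \<in> B" if "x \<in> insert q K" for x
    using that by (intro small_mem regular_card_finite_ordLess[OF regular]) simp_all
  have X: "X \<subseteq> B" unfolding X_def using singleton_mem by blast
  have "is_lub B (\<subseteq>) X (insert q K)"
    unfolding is_lub_def
  proof (intro conjI ballI impI)
    fix U assume "U \<in> B" and "\<forall>x\<in>X. x \<subseteq> U"
    then have "K \<subseteq> U" unfolding X_def by blast
    then show "insert q K \<subseteq> U" using large_mem_eq_top[OF \<open>U \<in> B\<close> _ large] by blast
  qed (use top_mem in \<open>auto simp: X_def\<close>)
  moreover have "|X| <o \<kappa>" unfolding X_def using assms by (rule card_of_image_ordLess)
  ultimately have "dist_join B (\<subseteq>) X (insert q K)" using kJD X unfolding kJD_def by blast
  \<comment> \<open>The join of the singletons meets \<open>{q}\<close> nontrivially, none of the singletons does.\<close>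
  moreover have q: "{q} \<in> B" using singleton_mem by blast
  moreover have "X \<subseteq> rel_ann B (\<subseteq>) {q} {}"
    using X q_notin unfolding X_def rel_ann_eq[OF q] by blast
  moreover have "insert q K \<notin> rel_ann B (\<subseteq>) {q} {}" unfolding rel_ann_eq[OF q] by blast
  ultimately show False
    using dist_join_iff_rel_ann[OF X \<open>is_lub B (\<subseteq>) X (insert q K)\<close>] empty_mem by blast
qed

end

definition small_cosmall_sets :: "'k rel \<Rightarrow> 'p set \<Rightarrow> 'p set \<Rightarrow> 'p \<Rightarrow> 'p set set" where
  "small_cosmall_sets \<kappa> K0 K1 q =
     {X. X \<subseteq> insert q (K0 \<union> K1) \<and> (if q \<in> X then |K1 - X| <o \<kappa> else |X \<inter> K0| <o \<kappa>)}"

locale small_cosmall_lattice =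
  fixes \<kappa> :: "'k rel" and K0 K1 :: "'p set" and q :: 'p
  assumes regular: "regular_card \<kappa>" and disjoint: "K0 \<inter> K1 = {}" and q_notin: "q \<notin> K0 \<union> K1"
    and large0: "\<not> |K0| <o \<kappa>" and large1: "\<not> |K1| <o \<kappa>"
begin

abbreviation A :: "'p set set" where
  "A \<equiv> small_cosmall_sets \<kappa> K0 K1 q"

lemma mem_iff:
  "X \<in> A \<longleftrightarrow> X \<subseteq> insert q (K0 \<union> K1) \<and> (if q \<in> X then |K1 - X| <o \<kappa> else |X \<inter> K0| <o \<kappa>)"
  unfolding small_cosmall_sets_def by blast

lemma Union_mem:
  assumes "\<X> \<subseteq> A" and "|\<X>| <o \<kappa>"
  shows "\<Union>\<X> \<in> A"
proof -
  have sub: "\<Union>\<X> \<subseteq> insert q (K0 \<union> K1)" using assms(1) mem_iff by blast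
  show ?thesis
  proof (cases "\<exists>X\<in>\<X>. q \<in> X")
    case True
    then obtain X where "X \<in> \<X>" and "q \<in> X" by blast
    then have "|K1 - X| <o \<kappa>" using assms(1) by (auto simp: mem_iff)
    then have "|K1 - \<Union>\<X>| <o \<kappa>" using \<open>X \<in> \<X>\<close> by (elim card_of_subset_ordLess[rotated]) blast
    then show ?thesis using sub \<open>X \<in> \<X>\<close> \<open>q \<in> X\<close> unfolding mem_iff by auto
  next
    case False
    then have "|\<Union>X\<in>\<X>. X \<inter> K0| <o \<kappa>"
      using assms by (intro regular_card_UN_ordLess[OF regular]) (auto simp: mem_iff)
    then show ?thesis using sub False unfolding mem_iff by auto
  qed
qed

lemma Int_mem:
  assumes "X \<in> A" and "Y \<in> A"
  shows "X \<inter> Y \<in> A"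
proof (cases "q \<in> X \<and> q \<in> Y")
  case True
  have "|K1 - X| <o \<kappa>" and "|K1 - Y| <o \<kappa>" using assms True unfolding mem_iff by simp_all
  then have "|K1 - X \<inter> Y| <o \<kappa>" unfolding Diff_Int by (rule regular_card_Un_ordLess[OF regular])
  then show ?thesis using assms True unfolding mem_iff by auto
next
  case False
  then have "|X \<inter> K0| <o \<kappa> \<or> |Y \<inter> K0| <o \<kappa>" using assms unfolding mem_iff by auto
  then have "|X \<inter> Y \<inter> K0| <o \<kappa>"
    using card_of_subset_ordLess[of "X \<inter> Y \<inter> K0" "X \<inter> K0" \<kappa>]
      card_of_subset_ordLess[of "X \<inter> Y \<inter> K0" "Y \<inter> K0" \<kappa>] by blast
  then show ?thesis using assms False unfolding mem_iff by auto
qed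

lemma mem_if_q_and_K1_subset:
  assumes "X \<subseteq> insert q (K0 \<union> K1)" and "q \<in> X" and "K1 \<subseteq> X"
  shows "X \<in> A"
proof -
  have empty: "K1 - X = {}" using assms(3) by blast
  have "|K1 - X| <o \<kappa>"
    unfolding empty by (rule regular_card_finite_ordLess[OF regular finite.emptyI])
  then show ?thesis unfolding mem_iff using assms(1,2) by simp
qed

sublocale set_lattice A "insert q (K0 \<union> K1)"
proof
  show "X \<subseteq> insert q (K0 \<union> K1)" if "X \<in> A" for X using that unfolding mem_iff by blast
  show "insert q (K0 \<union> K1) \<in> A" by (rule mem_if_q_and_K1_subset) auto
  show "{} \<in> A"
    unfolding mem_iff using regular_card_finite_ordLess[OF regular finite.emptyI] by simp
  show "X \<union> Y \<in> A" if "X \<in> A" and "Y \<in> A" for X Y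
    using that Union_mem[of "{X, Y}"] regular_card_finite_ordLess[OF regular, of "{X, Y}"] by simp
  show "X \<inter> Y \<in> A" if "X \<in> A" and "Y \<in> A" for X Y using that by (rule Int_mem)
qed

lemma kJD: "kJD \<kappa> A (\<subseteq>)"
  unfolding kJD_def
proof (intro allI impI, elim conjE)
  fix \<X> j assume "\<X> \<subseteq> A" and "|\<X>| <o \<kappa>" and lub: "is_lub A (\<subseteq>) \<X> j"
  from \<open>\<X> \<subseteq> A\<close> \<open>|\<X>| <o \<kappa>\<close> have "\<Union>\<X> \<in> A" by (rule Union_mem)
  then have "j = \<Union>\<X>" using is_lub_unique[OF lub is_lub_Union[OF \<open>\<X> \<subseteq> A\<close>]] by blast
  then show "dist_join A (\<subseteq>) \<X> j" using dist_join_Union[OF \<open>\<X> \<subseteq> A\<close> \<open>\<Union>\<X> \<in> A\<close>] by simp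
qed

lemma normal_ideal_small: "normal_ideal A (\<subseteq>) {X \<in> A. X \<subseteq> K0}"
proof (rule normal_idealI)
  show "lbs A (\<subseteq>) (ubs A (\<subseteq>) {X \<in> A. X \<subseteq> K0}) \<subseteq> {X \<in> A. X \<subseteq> K0}"
  proof
    fix Z assume Z: "Z \<in> lbs A (\<subseteq>) (ubs A (\<subseteq>) {X \<in> A. X \<subseteq> K0})"
    then have "Z \<in> A" unfolding lbs_def by blast
    \<comment> \<open>Removing a single point of \<open>K1\<close> from the top leaves an upper bound of the ideal.\<close>
    have "Z \<inter> K1 = {}"
    proof (rule ccontr)
      assume "Z \<inter> K1 \<noteq> {}"
      then obtain y where "y \<in> Z" and "y \<in> K1" by blast
      have "K1 - (insert q (K0 \<union> K1) - {y}) = {y}" using \<open>y \<in> K1\<close> by blast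
      then have "insert q (K0 \<union> K1) - {y} \<in> A"
        using \<open>y \<in> K1\<close> q_notin regular_card_finite_ordLess[OF regular, of "{y}"]
        unfolding mem_iff by auto
      then have "insert q (K0 \<union> K1) - {y} \<in> ubs A (\<subseteq>) {X \<in> A. X \<subseteq> K0}"
        using \<open>y \<in> K1\<close> disjoint unfolding ubs_def by (auto dest: subset_top)
      then show False using Z \<open>y \<in> Z\<close> unfolding lbs_def by blast
    qed
    moreover have "q \<notin> Z"
    proof
      assume "q \<in> Z"
      then have "|K1 - Z| <o \<kappa>" using \<open>Z \<in> A\<close> by (simp add: mem_iff)
      moreover have "K1 - Z = K1" using \<open>Z \<inter> K1 = {}\<close> by blast
      ultimately show False using large1 by simp
    qed
    ultimately show "Z \<in> {X \<in> A. X \<subseteq> K0}" using \<open>Z \<in> A\<close> subset_top[OF \<open>Z \<in> A\<close>] by blast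
  qed
qed blast

lemma not_kproH: "\<not> kproH \<kappa> A (\<subseteq>)"
proof
  assume kproH: "kproH \<kappa> A (\<subseteq>)"
  define N0 where "N0 = {X \<in> A. X \<subseteq> K0}"
  define P where "P = insert q (K0 \<union> K1)"
  have empty_small: "|{}| <o \<kappa>" by (rule regular_card_finite_ordLess[OF regular finite.emptyI])
  have "K1 \<inter> K0 = {}" using disjoint by blast
  then have K1: "K1 \<in> A" unfolding mem_iff using q_notin empty_small by auto
  have a: "insert q K1 \<in> A" by (rule mem_if_q_and_K1_subset) auto
  have singleton: "{k} \<in> N0" if "k \<in> K0" for k
  proof -
    have "q \<notin> {k}" using that q_notin by blast
    then show ?thesis unfolding N0_def mem_iff
      using that regular_card_finite_ordLess[OF regular, of "{k} \<inter> K0"] by simp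
  qed
  have "is_lub A (\<subseteq>) (N0 \<union> down A (\<subseteq>) K1) P"
    unfolding is_lub_def
  proof (intro conjI ballI impI)
    show "P \<in> A" unfolding P_def by (rule top_mem)
    fix X assume "X \<in> N0 \<union> down A (\<subseteq>) K1"
    then show "X \<subseteq> P" unfolding N0_def down_def P_def using subset_top by blast
  next
    fix U assume U: "U \<in> A" and "\<forall>X\<in>N0 \<union> down A (\<subseteq>) K1. X \<subseteq> U"
    moreover have "K1 \<in> down A (\<subseteq>) K1" using K1 unfolding down_def by blast
    ultimately have "K0 \<subseteq> U" and "K1 \<subseteq> U" using singleton by blast+
    moreover have "q \<in> U"
    proof (rule ccontr)
      assume "q \<notin> U"
      then have "|U \<inter> K0| <o \<kappa>" using U unfolding mem_iff by simp
      moreover have "U \<inter> K0 = K0" using \<open>K0 \<subseteq> U\<close> by blast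
      ultimately show False using large0 by simp
    qed
    ultimately show "P \<subseteq> U" unfolding P_def by blast
  qed
  moreover have "N0 \<union> down A (\<subseteq>) K1 \<subseteq> rel_ann A (\<subseteq>) (insert q K1) K1"
    using disjoint q_notin unfolding rel_ann_eq[OF a] N0_def down_def by blast
  moreover have "normal_ideal A (\<subseteq>) N" if "N \<in> {N0, down A (\<subseteq>) K1}" for N
    using that normal_ideal_small normal_ideal_down[OF K1] unfolding N0_def by blast
  moreover have "|{N0, down A (\<subseteq>) K1}| <o \<kappa>" by (rule regular_card_finite_ordLess[OF regular]) simp
  ultimately have "P \<in> rel_ann A (\<subseteq>) (insert q K1) K1"
    using kproH_lub_mem_rel_ann[OF kproH _ _ a K1, of "{N0, down A (\<subseteq>) K1}"] by simp
  then show False using q_notin unfolding rel_ann_eq[OF a] P_def by blast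
qed

end

lemma exists_kproH_not_kproH:
  fixes \<mu> :: "'l rel" and \<kappa> :: "'k rel"
  assumes "regular_card \<mu>" and "\<mu> <o \<kappa>"
  shows "\<exists>(S :: 'k set set set) le. bdlat S le \<and> kproH \<mu> S le \<and> \<not> kproH \<kappa> S le"
proof -
  have "Card_order \<mu>" using assms(1) unfolding regular_card_def by blast
  then have Field_\<mu>: "|Field \<mu>| =o \<mu>" by (rule card_of_Field_ordIso)
  then have "|Field \<mu>| \<le>o \<kappa>" using ordIso_ordLeq_trans ordLess_imp_ordLeq[OF assms(2)] by blast
  then obtain I where "I \<subseteq> Field \<kappa>" and "|Field \<mu>| =o |I|"
    using internalize_card_of_ordLeq by blast
  define K where "K = (\<lambda>k. {k}) ` I"
  have "|I| =o |K|" unfolding K_def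
    by (rule card_of_ordIso[THEN iffD1], intro exI[of _ "\<lambda>k. {k}"] inj_on_imp_bij_betw)
      (simp add: inj_on_def)
  then have K_\<mu>: "|K| =o \<mu>"
    using \<open>|Field \<mu>| =o |I|\<close> Field_\<mu> ordIso_symmetric ordIso_transitive by metis
  interpret small_sets_with_top_lattice \<mu> K "{}"
  proof
    show "\<not> |K| <o \<mu>" using K_\<mu> not_ordLess_ordIso by blast
  qed (use assms(1) in \<open>auto simp: K_def\<close>)
  have "|K| <o \<kappa>" using ordIso_ordLess_trans[OF K_\<mu> assms(2)] .
  then have "\<not> kproH \<kappa> B (\<subseteq>)" using not_kJD kproH_imp_kJD by blast
  then show ?thesis using bdlat kproH by blast
qed

lemma exists_kJD_not_kproH:
  fixes \<kappa> :: "'k rel"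
  assumes "regular_card \<kappa>"
  shows "\<exists>(S :: 'k set set set) le. bdlat S le \<and> kJD \<kappa> S le \<and> \<not> kproH \<kappa> S le"
proof -
  have "Card_order \<kappa>" and infinite: "\<not> finite (Field \<kappa>)"
    using assms unfolding regular_card_def by auto
  define K0 where "K0 = (\<lambda>k. {k}) ` Field \<kappa>"
  define K1 where "K1 = (\<lambda>k. Field \<kappa> - {k}) ` Field \<kappa>"
  interpret small_cosmall_lattice \<kappa> K0 K1 "{}"
  proof
    show "K0 \<inter> K1 = {}"
    proof (rule ccontr)
      assume "K0 \<inter> K1 \<noteq> {}"
      then obtain a b where "{a} = Field \<kappa> - {b}" unfolding K0_def K1_def by blast
      then have "Field \<kappa> \<subseteq> {a, b}" by blast
      then show False using infinite finite_subset by blast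
    qed
    have "Field \<kappa> - {k} \<noteq> {}" for k
      using infinite by (metis finite.emptyI finite_insert insert_Diff_single subset_insert_iff)
    then show "{} \<notin> K0 \<union> K1" unfolding K0_def K1_def by blast
    show "\<not> |K0| <o \<kappa>" unfolding K0_def
      by (rule card_of_inj_image_Field_not_ordLess[OF \<open>Card_order \<kappa>\<close>]) (simp add: inj_on_def)
    show "\<not> |K1| <o \<kappa>" unfolding K1_def
      by (rule card_of_inj_image_Field_not_ordLess[OF \<open>Card_order \<kappa>\<close>]) (auto simp: inj_on_def)
  qed (rule assms)
  show ?thesis using bdlat kJD not_kproH by blast
qed

theorem theorem4p8:
  fixes \<kappa> :: "'k rel" and lam :: "'l rel"
  shows
  "(regular_card lam \<and> regular_card \<kappa> \<and> (lam, \<kappa>) \<in> ordLeq \<longrightarrow>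
      (\<forall>(S::'a set) le. bdlat S le \<and> kproH \<kappa> S le \<longrightarrow> kproH lam S le)) \<and>
   (regular_card lam \<and> regular_card \<kappa> \<and> (lam, \<kappa>) \<in> ordLess \<longrightarrow>
      (\<exists>(S::'k set set set) le. bdlat S le \<and> kproH lam S le \<and> \<not> kproH \<kappa> S le)) \<and>
   (\<forall>(S::'a set) le. bdlat S le \<and> proH S le \<and> regular_card \<kappa> \<longrightarrow> kproH \<kappa> S le) \<and>
   (\<forall>(S::'a set) le. bdlat S le \<longrightarrow>
      (proH S le \<longleftrightarrow> (\<forall>\<mu>::'a set set rel. regular_card \<mu> \<longrightarrow> kproH \<mu> S le))) \<and>
   (regular_card \<kappa> \<longrightarrow>
      (\<forall>(S::'a set) le. bdlat S le \<and> kproH \<kappa> S le \<longrightarrow> kJD \<kappa> S le) \<and>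
      (\<exists>(S::'k set set set) le. bdlat S le \<and> kJD \<kappa> S le \<and> \<not> kproH \<kappa> S le)) \<and>
   (\<forall>(S::'a set) le. bdlat S le \<longrightarrow> kJD natLeq S le) \<and>
   (\<forall>(S::'a set) le. bdlat S le \<and> kproH natLeq S le \<longrightarrow> kJD natLeq S le) \<and>
   (\<exists>(S::nat set set set) le. bdlat S le \<and> kJD natLeq S le \<and> \<not> kproH natLeq S le)"
proof -
  have bdl: "bounded_distrib_lattice S le" if "bdlat S le" for S :: "'a set" and le
    using that by unfold_locales
  show ?thesis
    apply (intro conjI impI allI iffI; (elim conjE)?)
    subgoal by (rule kproH_antimono)
    subgoal by (rule exists_kproH_not_kproH)
    subgoal by (rule bounded_distrib_lattice.proH_imp_kproH[OF bdl])
    subgoal by (rule bounded_distrib_lattice.proH_imp_kproH[OF bdl])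
    subgoal by (rule bounded_distrib_lattice.proH_if_all_kproH[OF bdl]) blast+
    subgoal by (rule bounded_distrib_lattice.kproH_imp_kJD[OF bdl])
    subgoal by (rule exists_kJD_not_kproH)
    subgoal by (rule bounded_distrib_lattice.kJD_natLeq[OF bdl])
    subgoal by (rule bounded_distrib_lattice.kJD_natLeq[OF bdl])
    subgoal by (rule exists_kJD_not_kproH[OF regular_card_natLeq])
    done
qed

end
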